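(* Let $\alpha: I\to M$ be a unit-speed curve on an oriented surface $M\subset E^3$ with Darboux frame $\{T,V,U\}$ and curvatures $k_g,k_n,\tau_g$, with $k_n(s)\neq 0$ for all $s\in I$. Let $c_2$ be a nonzero real constant, let $\chi$ be an antiderivative of $k_g\tau_g/k_n$ on $I$, and let $$\gamma(s)=\alpha(s)-c_2e^{\chi(s)}\Big(\frac{\tau_g(s)}{k_n(s)}T(s)-V(s)\Big),$$ and assume $\gamma$ is regular. Then $\gamma$ is a general helix if and only if $\alpha$ is a helical curve on $M$.
   Context: $M$ is an oriented surface in Euclidean 3-space $E^3$ and $\alpha:I\to M$ is a unit-speed curve with arc-length parameter $s$. Its Darboux frame $\{T,V,U\}$ consists of the unit tangent $T=\alpha'$, the unit surface normal $U$ of $M$ along $\alpha$, and $V=U\times T$; it satisfies $T'=k_gV+k_nU$, $V'=-k_gT+\tau_gU$, $U'=-k_nT-\tau_gV$, where $k_g,k_n,\tau_g$ are the geodesic curvature, normal curvature and geodesic torsion. A regular curve is a general helix if its unit tangent makes a constant angle with a fixed direction. $\alpha$ is a helical curve on $M$ if $\langle T,d\rangle$ is constant for some fixed unit vector $d$. *)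

theory Defs
  imports "HOL-Analysis.Analysis" "HOL-Analysis.Cross3"
begin

definition regular_curve :: "real set \<Rightarrow> (real \<Rightarrow> real^3) \<Rightarrow> bool" where
  "regular_curve I g \<longleftrightarrow>
     (\<forall>s\<in>I. g differentiable (at s) \<and> vector_derivative g (at s) \<noteq> 0)"

definition general_helix :: "real set \<Rightarrow> (real \<Rightarrow> real^3) \<Rightarrow> bool" where
  "general_helix I g \<longleftrightarrow> regular_curve I g \<and>
     (\<exists>d::real^3. \<exists>c::real. norm d = 1 \<and>
        (\<forall>s\<in>I. ((1 / norm (vector_derivative g (at s))) *\<^sub>R vector_derivative g (at s)) \<bullet> d = c))"

definition helical_curve :: "real set \<Rightarrow> (real \<Rightarrow> real^3) \<Rightarrow> bool" where
  "helical_curve I T \<longleftrightarrow> (\<exists>d::real^3. \<exists>c::real. norm d = 1 \<and> (\<forall>s\<in>I. T s \<bullet> d = c))"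

definition darboux_frame ::
  "real set \<Rightarrow> (real \<Rightarrow> real^3) \<Rightarrow> (real \<Rightarrow> real^3) \<Rightarrow> (real \<Rightarrow> real^3) \<Rightarrow> (real \<Rightarrow> real^3)
   \<Rightarrow> (real \<Rightarrow> real) \<Rightarrow> (real \<Rightarrow> real) \<Rightarrow> (real \<Rightarrow> real) \<Rightarrow> bool" where
  "darboux_frame I \<alpha> T V U kg kn tg \<longleftrightarrow>
     (\<forall>s\<in>I.
        (\<alpha> has_vector_derivative T s) (at s) \<and> norm (T s) = 1 \<and>
        norm (U s) = 1 \<and> U s \<bullet> T s = 0 \<and> V s = cross3 (U s) (T s) \<and>
        (T has_vector_derivative (kg s *\<^sub>R V s + kn s *\<^sub>R U s)) (at s) \<and>
        (V has_vector_derivative (- kg s *\<^sub>R T s + tg s *\<^sub>R U s)) (at s) \<and>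
        (U has_vector_derivative (- kn s *\<^sub>R T s - tg s *\<^sub>R V s)) (at s))"

end

theory Submission
  imports Defs
begin

text \<open>
  Write \<gamma> = \<alpha> - p T + g V with g = c2 exp \<chi> and p = g tg / kn. The Darboux equations together
  with g' = p kg and p kn = g tg make the U- and V-components of \<gamma>' cancel, so \<gamma>' = \<lambda> T with
  \<lambda> \<noteq> 0 by regularity, and the unit tangent of \<gamma> is sgn \<lambda> \<cdot> T.
  If T \<bullet> d = c is constant with c \<noteq> 0, then (\<gamma> \<bullet> d)' = \<lambda> c never vanishes, so by Darboux's
  intermediate value property of derivatives \<lambda> has constant sign and \<gamma> is a helix with axis d.
  Conversely, if the unit tangent of \<gamma> makes a constant angle with d, the continuous function
  T \<bullet> d takes only the two values \<plusminus>c on the interval I, hence is constant.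
\<close>

lemma has_vector_derivative_inner:
  fixes f g :: "real \<Rightarrow> 'a::real_inner"
  assumes "(f has_vector_derivative f') (at s)" "(g has_vector_derivative g') (at s)"
  shows "((\<lambda>x. f x \<bullet> g x) has_real_derivative (f' \<bullet> g s + f s \<bullet> g')) (at s)"
proof -
  have "((\<lambda>x. f x \<bullet> g x) has_derivative (\<lambda>h. f s \<bullet> (h *\<^sub>R g') + (h *\<^sub>R f') \<bullet> g s)) (at s)"
    using assms unfolding has_vector_derivative_def by (intro has_derivative_inner) auto
  then show ?thesis unfolding has_field_derivative_def
    by (rule has_derivative_eq_rhs) (auto simp: fun_eq_iff algebra_simps)
qed

lemma has_real_derivative_zero_between_opposite_signs:
  fixes h h' :: "real \<Rightarrow> real"
  assumes "a < b" and der: "\<And>x. x \<in> {a..b} \<Longrightarrow> (h has_real_derivative h' x) (at x)"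
    and "h' a > 0" and "h' b < 0"
  shows "\<exists>z\<in>{a<..<b}. h' z = 0"
proof -
  have "continuous_on {a..b} h"
    using der by (meson DERIV_isCont continuous_at_imp_continuous_on)
  then obtain z where z: "z \<in> {a..b}" and max: "\<And>y. y \<in> {a..b} \<Longrightarrow> h y \<le> h z"
    using continuous_attains_sup[OF compact_Icc] \<open>a < b\<close>
    by (metis atLeastAtMost_iff atLeastatMost_empty_iff2 less_imp_le not_le)
  obtain e where "e > 0" "\<And>t. t > 0 \<Longrightarrow> t < e \<Longrightarrow> h a < h (a + t)"
    using DERIV_pos_inc_right[OF der \<open>h' a > 0\<close>] \<open>a < b\<close> by auto
  then have "h a < h (a + min (e/2) (b - a))" "a + min (e/2) (b - a) \<in> {a..b}"
    using \<open>a < b\<close> by auto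
  then have "z \<noteq> a" using max by fastforce
  obtain e' where "e' > 0" "\<And>t. t > 0 \<Longrightarrow> t < e' \<Longrightarrow> h b < h (b - t)"
    using DERIV_neg_dec_left[OF der \<open>h' b < 0\<close>] \<open>a < b\<close> by auto
  then have "h b < h (b - min (e'/2) (b - a))" "b - min (e'/2) (b - a) \<in> {a..b}"
    using \<open>a < b\<close> by auto
  then have "z \<noteq> b" using max by fastforce
  with z \<open>z \<noteq> a\<close> have "a < z" "z < b" by auto
  moreover have "h' z = 0"
  proof (rule DERIV_local_max[OF der])
    show "z \<in> {a..b}" using z .
    show "0 < min (z - a) (b - z)" using \<open>a < z\<close> \<open>z < b\<close> by simp
    show "\<forall>y. \<bar>z - y\<bar> < min (z - a) (b - z) \<longrightarrow> h y \<le> h z"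
      using max by (auto simp: abs_less_iff)
  qed
  ultimately show ?thesis by auto
qed

lemma has_real_derivative_nonzero_imp_sign_const:
  fixes h h' :: "real \<Rightarrow> real"
  assumes J: "is_interval J" and der: "\<And>x. x \<in> J \<Longrightarrow> (h has_real_derivative h' x) (at x)"
    and nz: "\<And>x. x \<in> J \<Longrightarrow> h' x \<noteq> 0"
  shows "(\<forall>x\<in>J. h' x > 0) \<or> (\<forall>x\<in>J. h' x < 0)"
proof (rule ccontr)
  assume "\<not> ?thesis"
  then obtain x y where "x \<in> J" "y \<in> J" "h' x > 0" "h' y < 0"
    using nz by (meson linorder_neqE_linordered_idom)
  have der_on: "(h has_real_derivative h' t) (at t)" if "u \<in> J" "v \<in> J" "t \<in> {u..v}" for u v t
    using der mem_is_interval_1_I[OF J that(1,2)] that(3) by auto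
  have nz_on: "h' t \<noteq> 0" if "u \<in> J" "v \<in> J" "t \<in> {u..v}" for u v t
    using nz mem_is_interval_1_I[OF J that(1,2)] that(3) by auto
  consider "x < y" | "y < x"
    using \<open>h' x > 0\<close> \<open>h' y < 0\<close> by (metis less_asym linorder_neqE)
  then show False
  proof cases
    case 1
    have "\<And>t. t \<in> {x..y} \<Longrightarrow> (h has_real_derivative h' t) (at t)"
      using der_on \<open>x \<in> J\<close> \<open>y \<in> J\<close> by blast
    from has_real_derivative_zero_between_opposite_signs[OF 1 this \<open>h' x > 0\<close> \<open>h' y < 0\<close>]
    obtain z where "z \<in> {x<..<y}" "h' z = 0" ..
    then show False using nz_on[OF \<open>x \<in> J\<close> \<open>y \<in> J\<close>, of z] by simp
  next
    case 2
    have "\<And>t. t \<in> {y..x} \<Longrightarrow> ((\<lambda>t. - h t) has_real_derivative - h' t) (at t)"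
      using der_on \<open>x \<in> J\<close> \<open>y \<in> J\<close> by (blast intro: DERIV_minus)
    from has_real_derivative_zero_between_opposite_signs[OF 2 this] \<open>h' x > 0\<close> \<open>h' y < 0\<close>
    obtain z where "z \<in> {y<..<x}" "h' z = 0" by force
    then show False using nz_on[OF \<open>y \<in> J\<close> \<open>x \<in> J\<close>, of z] by simp
  qed
qed

lemma scaleR_unit_vector_normalized:
  fixes v :: "'a::real_normed_vector"
  assumes "norm v = 1"
  shows "(1 / norm (l *\<^sub>R v)) *\<^sub>R (l *\<^sub>R v) = sgn l *\<^sub>R v"
  using assms by (simp add: sgn_real_def divide_simps)

context
  fixes I :: "real set" and \<gamma> T :: "real \<Rightarrow> real^3" and lam :: "real \<Rightarrow> real"
  assumes interval: "is_interval I" and regular: "regular_curve I \<gamma>"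
    and T_cont: "continuous_on I T" and T_unit: "\<And>s. s \<in> I \<Longrightarrow> norm (T s) = 1"
    and velocity: "\<And>s. s \<in> I \<Longrightarrow> vector_derivative \<gamma> (at s) = lam s *\<^sub>R T s"
begin

lemma velocity_factor_nonzero: "s \<in> I \<Longrightarrow> lam s \<noteq> 0"
  using regular velocity unfolding regular_curve_def by fastforce

lemma unit_tangent_eq_sgn_scaleR:
  assumes "s \<in> I"
  shows "(1 / norm (vector_derivative \<gamma> (at s))) *\<^sub>R vector_derivative \<gamma> (at s)
     = sgn (lam s) *\<^sub>R T s"
  unfolding velocity[OF assms] by (rule scaleR_unit_vector_normalized[OF T_unit[OF assms]])

lemma helical_curve_if_general_helix:
  assumes "general_helix I \<gamma>"
  shows "helical_curve I T"
proof -
  obtain d c where "norm d = 1" and c: "\<And>s. s \<in> I \<Longrightarrow> sgn (lam s) * (T s \<bullet> d) = c"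
    using assms unit_tangent_eq_sgn_scaleR unfolding general_helix_def by (metis inner_scaleR_left)
  have "T s \<bullet> d \<in> {c, - c}" if "s \<in> I" for s
    using c[OF that] velocity_factor_nonzero[OF that] by (auto simp: sgn_if split: if_splits)
  then have "finite ((\<lambda>s. T s \<bullet> d) ` I)"
    by (auto intro: finite_subset[of _ "{c, - c}"])
  then have "(\<lambda>s. T s \<bullet> d) constant_on I"
    using T_cont interval
    by (intro continuous_finite_range_constant) (auto simp: is_interval_connected intro: continuous_intros)
  then show ?thesis
    using \<open>norm d = 1\<close> unfolding helical_curve_def constant_on_def by blast
qed

lemma general_helix_if_helical_curve:
  assumes "helical_curve I T"
  shows "general_helix I \<gamma>"
proof -
  obtain d c where "norm d = 1" and c: "\<And>s. s \<in> I \<Longrightarrow> T s \<bullet> d = c"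
    using assms unfolding helical_curve_def by blast
  have "\<exists>c'. \<forall>s\<in>I. sgn (lam s) * c = c'"
  proof (cases "c = 0")
    case False
    have "((\<lambda>x. \<gamma> x \<bullet> d) has_real_derivative lam s * c) (at s)" if "s \<in> I" for s
    proof -
      have "(\<gamma> has_vector_derivative vector_derivative \<gamma> (at s)) (at s)"
        using regular that unfolding regular_curve_def by (simp add: vector_derivative_works)
      from has_vector_derivative_inner[OF this has_vector_derivative_const[of d]]
      show ?thesis using velocity[OF that] c[OF that] by simp
    qed
    then have "(\<forall>s\<in>I. lam s * c > 0) \<or> (\<forall>s\<in>I. lam s * c < 0)"
      using velocity_factor_nonzero False
      by (intro has_real_derivative_nonzero_imp_sign_const[OF interval]) auto
    then obtain \<sigma> where "\<And>s. s \<in> I \<Longrightarrow> sgn (lam s * c) = \<sigma>"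
      by (metis sgn_pos sgn_neg)
    moreover have "sgn (lam s) * c = sgn (lam s * c) * \<bar>c\<bar>" for s
      by (simp add: sgn_mult mult.assoc sgn_mult_abs)
    ultimately show ?thesis by auto
  qed simp
  then obtain c' where
    "\<forall>s\<in>I. ((1 / norm (vector_derivative \<gamma> (at s))) *\<^sub>R vector_derivative \<gamma> (at s)) \<bullet> d = c'"
    using unit_tangent_eq_sgn_scaleR c by auto
  then show ?thesis
    using regular \<open>norm d = 1\<close> unfolding general_helix_def by blast
qed

lemma general_helix_iff_helical_curve: "general_helix I \<gamma> \<longleftrightarrow> helical_curve I T"
  using general_helix_if_helical_curve helical_curve_if_general_helix by blast

end

lemma associated_curve_velocity_parallel_tangent:
  fixes \<alpha> T V U \<gamma> :: "real \<Rightarrow> real^3" and kg kn tg chi :: "real \<Rightarrow> real"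
  assumes "open I" and frame: "darboux_frame I \<alpha> T V U kg kn tg"
    and kn: "\<forall>s\<in>I. kn s \<noteq> 0"
    and chi: "\<forall>s\<in>I. (chi has_real_derivative (kg s * tg s / kn s)) (at s)"
    and gamma: "\<forall>s\<in>I. \<gamma> s = \<alpha> s - (c2 * exp (chi s)) *\<^sub>R ((tg s / kn s) *\<^sub>R T s - V s)"
    and "s \<in> I" and "\<gamma> differentiable (at s)"
  shows "\<exists>l. vector_derivative \<gamma> (at s) = l *\<^sub>R T s"
proof -
  define g where "g x = c2 * exp (chi x)" for x
  define p where "p x = g x * (tg x / kn x)" for x
  from frame \<open>s \<in> I\<close> have d\<alpha>: "(\<alpha> has_vector_derivative T s) (at s)"
    and dT: "(T has_vector_derivative kg s *\<^sub>R V s + kn s *\<^sub>R U s) (at s)"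
    and dV: "(V has_vector_derivative - kg s *\<^sub>R T s + tg s *\<^sub>R U s) (at s)"
    unfolding darboux_frame_def by blast+
  have \<gamma>_eq: "\<alpha> x - (p x *\<^sub>R T x - g x *\<^sub>R V x) = \<gamma> x" if "x \<in> I" for x
    using gamma that by (simp add: p_def g_def algebra_simps)
  have p_eq: "(\<alpha> x - \<gamma> x) \<bullet> T x = p x" if "x \<in> I" for x
  proof -
    have "T x \<bullet> T x = 1" "V x \<bullet> T x = 0"
      using frame that unfolding darboux_frame_def by (auto simp: dot_square_norm dot_cross_self)
    then show ?thesis by (simp add: \<gamma>_eq[OF that, symmetric] inner_diff_left)
  qed
  obtain \<gamma>' where d\<gamma>: "(\<gamma> has_vector_derivative \<gamma>') (at s)"
    using \<open>\<gamma> differentiable (at s)\<close> vector_derivative_works by blast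
  \<comment> \<open>tg and kn need not be differentiable, but p is, being the product (\<alpha> - \<gamma>) \<bullet> T\<close>
  obtain p' where dp: "(p has_real_derivative p') (at s)"
    using has_field_derivative_transform_within_open[OF
        has_vector_derivative_inner[OF has_vector_derivative_diff[OF d\<alpha> d\<gamma>] dT] \<open>open I\<close> \<open>s \<in> I\<close> p_eq]
    by blast
  have dg: "(g has_real_derivative p s * kg s) (at s)"
    using chi \<open>s \<in> I\<close> unfolding g_def p_def by (auto intro!: derivative_eq_intros)
  have pkn: "kn s * p s = g s * tg s"
    using kn \<open>s \<in> I\<close> by (simp add: p_def)
  have "((\<lambda>x. \<alpha> x - (p x *\<^sub>R T x - g x *\<^sub>R V x)) has_vector_derivative
      T s - ((p s *\<^sub>R (kg s *\<^sub>R V s + kn s *\<^sub>R U s) + p' *\<^sub>R T s)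
        - (g s *\<^sub>R (- kg s *\<^sub>R T s + tg s *\<^sub>R U s) + (p s * kg s) *\<^sub>R V s))) (at s)"
    by (intro has_vector_derivative_diff has_vector_derivative_scaleR d\<alpha> dT dV dp dg)
  then have "((\<lambda>x. \<alpha> x - (p x *\<^sub>R T x - g x *\<^sub>R V x)) has_vector_derivative
      (1 - p' - g s * kg s) *\<^sub>R T s) (at s)"
    by (rule has_vector_derivative_eq_rhs) (simp add: algebra_simps pkn)
  then have "(\<gamma> has_vector_derivative (1 - p' - g s * kg s) *\<^sub>R T s) (at s)"
    by (rule has_vector_derivative_transform_within_open[OF _ \<open>open I\<close> \<open>s \<in> I\<close> \<gamma>_eq])
  then show ?thesis
    using vector_derivative_at by blast
qed

theorem theorem3p9:
  fixes I :: "real set" and M :: "(real^3) set" and N :: "real^3 \<Rightarrow> real^3"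
    and \<alpha> T V U \<gamma> :: "real \<Rightarrow> real^3"
    and kg kn tg chi :: "real \<Rightarrow> real" and c2 :: real
  assumes I: "is_interval I" "open I" "I \<noteq> {}"
    and surf: "\<forall>s\<in>I. \<alpha> s \<in> M" "continuous_on M N" "\<forall>p\<in>M. norm (N p) = 1"
              "\<forall>s\<in>I. U s = N (\<alpha> s)"
    and frame: "darboux_frame I \<alpha> T V U kg kn tg"
    and kn: "\<forall>s\<in>I. kn s \<noteq> 0"
    and c2: "c2 \<noteq> 0"
    and chi: "\<forall>s\<in>I. (chi has_real_derivative (kg s * tg s / kn s)) (at s)"
    and gamma: "\<forall>s\<in>I. \<gamma> s = \<alpha> s - (c2 * exp (chi s)) *\<^sub>R ((tg s / kn s) *\<^sub>R T s - V s)"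
    and reg: "regular_curve I \<gamma>"
  shows "general_helix I \<gamma> \<longleftrightarrow> helical_curve I T"
proof -
  have "\<forall>s\<in>I. \<exists>l. vector_derivative \<gamma> (at s) = l *\<^sub>R T s"
    using associated_curve_velocity_parallel_tangent[OF I(2) frame kn chi gamma] reg
    unfolding regular_curve_def by blast
  then obtain lam where "\<And>s. s \<in> I \<Longrightarrow> vector_derivative \<gamma> (at s) = lam s *\<^sub>R T s"
    by metis
  moreover have "continuous_on I T" "\<And>s. s \<in> I \<Longrightarrow> norm (T s) = 1"
    using frame unfolding darboux_frame_def
    by (auto intro!: continuous_at_imp_continuous_on has_vector_derivative_continuous)
  ultimately show ?thesis
    using general_helix_iff_helical_curve[OF I(1) reg] by blast
qed

end
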